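(* Let $\mathsf{A}\subset GL_2(\mathbb{R})$. Then $\mathscr{R}(\mathsf{A})=\emptyset$ if and only if $\mathsf{A}$ is strongly conformal.
   Context: $\mathcal{S}(\mathsf{A})$ is the semigroup of finite products of elements of $\mathsf{A}$; $\mathscr{S}(\mathsf{A})=\overline{\mathbb{R}\mathcal{S}(\mathsf{A})}\subset M_2(\mathbb{R})$ (closure of all real multiples of elements of $\mathcal{S}(\mathsf{A})$); $\mathscr{R}(\mathsf{A})=\{A\in\mathscr{S}(\mathsf{A}):\operatorname{rank}(A)=1\}$. A set is strongly conformal if there is a single invertible $M$ with $|\det A|^{-1/2}MAM^{-1}\in O(2)$ for all $A$ in the set. *)

theory Defs
  imports "HOL-Analysis.Analysis"
begin

inductive_set prod_semigroup :: "(real^2^2) set \<Rightarrow> (real^2^2) set" for A where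
  gen: "B \<in> A \<Longrightarrow> B \<in> prod_semigroup A"
| mult: "B \<in> prod_semigroup A \<Longrightarrow> C \<in> prod_semigroup A \<Longrightarrow> B ** C \<in> prod_semigroup A"

definition scrS :: "(real^2^2) set \<Rightarrow> (real^2^2) set" where
  "scrS A = closure {c *\<^sub>R B | c B. B \<in> prod_semigroup A}"

definition scrR :: "(real^2^2) set \<Rightarrow> (real^2^2) set" where
  "scrR A = {B \<in> scrS A. rank B = 1}"

definition strongly_conformal :: "(real^2^2) set \<Rightarrow> bool" where
  "strongly_conformal A \<longleftrightarrow>
     (\<exists>M::real^2^2. invertible M \<and>
        (\<forall>B\<in>A. orthogonal_matrix ((1 / sqrt \<bar>det B\<bar>) *\<^sub>R (M ** B ** matrix_inv M))))"

end

(*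
  Conformality of Y (transpose Y ** Y a multiple of the identity) is preserved by products,
  scalar multiples and limits, and a singular conformal matrix is zero. So if M conjugates A into
  conformal matrices, it conjugates all of scrS A into conformal matrices, and scrS A has no
  rank-one element.

  Conversely, if the closed cone scrS A contains no rank-one matrix, compactness of its unit
  sphere gives a uniform bound |det B| >= delta * norm B ^ 2 on the semigroup, so the semigroup
  G of normalisations B / sqrt |det B| is bounded. Among the positive semidefinite forms Q with
  transpose s ** Q ** s <= I for all s in G and s = I, take one of maximal determinant. Conjugating
  by g in G maps this compact convex set into itself and preserves the determinant, while det is
  strictly concave on positive definite 2x2 forms, so the maximiser is G-invariant. Its Cholesky
  factor M then conjugates G into O(2).
*)
theory Submission
  imports Defs
begin

lemma matrix_eq_iff_2:
  "(X::real^2^2) = Y \<longleftrightarrow> X$1$1 = Y$1$1 \<and> X$1$2 = Y$1$2 \<and> X$2$1 = Y$2$1 \<and> X$2$2 = Y$2$2"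
  by (auto simp: vec_eq_iff forall_2)

lemma matrix_matrix_mult_nth_2: "((X::real^2^2) ** Y) $ i $ j = X$i$1 * Y$1$j + X$i$2 * Y$2$j"
  by (simp add: matrix_matrix_mult_def sum_2)

lemma matrix_vector_mult_nth_2: "((X::real^2^2) *v x) $ i = X$i$1 * x$1 + X$i$2 * x$2"
  by (simp add: matrix_vector_mult_def sum_2)

lemma quadratic_form_2:
  "(x::real^2) \<bullet> ((Q::real^2^2) *v x) = Q$1$1 * x$1^2 + (Q$1$2 + Q$2$1) * x$1 * x$2 + Q$2$2 * x$2^2"
  by (simp add: inner_vec_def matrix_vector_mult_def sum_2 power2_eq_square algebra_simps)

lemma inner_self_2: "(x::real^2) \<bullet> x = x$1^2 + x$2^2"
  by (simp add: inner_vec_def sum_2 power2_eq_square)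

lemma norm_matrix_2: "norm (X::real^2^2) ^ 2 = X$1$1^2 + X$1$2^2 + X$2$1^2 + X$2$2^2"
  unfolding power2_norm_eq_inner by (simp add: inner_vec_def sum_2 power2_eq_square)

lemma det_scaleR_2: "det (c *\<^sub>R (X::real^2^2)) = c^2 * det X"
  by (simp add: det_2 power2_eq_square algebra_simps)

lemma rank_eq_1_iff_2: "rank (X::real^2^2) = 1 \<longleftrightarrow> X \<noteq> 0 \<and> det X = 0"
  using rank_bound[of X] det_eq_0_rank[of X] rank_eq_0[of X] by auto

lemma norm_matrix_vector_mult_le_2: "norm ((S::real^2^2) *v x) \<le> norm S * norm x"
proof -
  have row: "(S$i$1 * x$1 + S$i$2 * x$2)^2 \<le> (S$i$1^2 + S$i$2^2) * (x$1^2 + x$2^2)" for i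
  proof -
    have "(S$i$1^2 + S$i$2^2) * (x$1^2 + x$2^2) - (S$i$1 * x$1 + S$i$2 * x$2)^2
        = (S$i$1 * x$2 - S$i$2 * x$1)^2"
      by (simp add: power2_eq_square algebra_simps)
    then show ?thesis by (metis diff_ge_0_iff_ge zero_le_power2)
  qed
  have "norm (S *v x) ^ 2 = (S$1$1 * x$1 + S$1$2 * x$2)^2 + (S$2$1 * x$1 + S$2$2 * x$2)^2"
    by (simp add: power2_norm_eq_inner inner_self_2 matrix_vector_mult_nth_2)
  also have "\<dots> \<le> (S$1$1^2 + S$1$2^2) * (x$1^2 + x$2^2) + (S$2$1^2 + S$2$2^2) * (x$1^2 + x$2^2)"
    using row[of 1] row[of 2] by (rule add_mono)
  also have "\<dots> = (norm S * norm x) ^ 2"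
    unfolding power_mult_distrib norm_matrix_2 by (simp add: power2_norm_eq_inner inner_self_2 algebra_simps)
  finally show ?thesis by (rule power2_le_imp_le) simp
qed

lemma invertible_matrix_inv:
  "invertible M \<Longrightarrow> M ** matrix_inv M = mat 1 \<and> matrix_inv M ** M = mat 1"
  unfolding invertible_def matrix_inv_def by (rule someI_ex)

lemma det_prod_semigroup_nonzero:
  assumes "\<forall>B\<in>A. invertible B" "B \<in> prod_semigroup A"
  shows "det B \<noteq> 0"
  using assms(2) by induction (use assms(1) in \<open>auto simp: invertible_det_nz det_mul\<close>)

definition conformal_matrix :: "real^'n^'n \<Rightarrow> bool" where
  "conformal_matrix Y \<longleftrightarrow> (\<exists>l. transpose Y ** Y = l *\<^sub>R mat 1)"

lemma orthogonal_imp_conformal_matrix: "orthogonal_matrix U \<Longrightarrow> conformal_matrix U"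
  unfolding orthogonal_matrix_def conformal_matrix_def by (metis scale_one)

lemma conformal_matrix_mult:
  assumes "conformal_matrix Y" "conformal_matrix Z"
  shows "conformal_matrix (Y ** Z)"
proof -
  obtain l m where l: "transpose Y ** Y = l *\<^sub>R mat 1" and m: "transpose Z ** Z = m *\<^sub>R mat 1"
    using assms unfolding conformal_matrix_def by blast
  have "transpose (Y ** Z) ** (Y ** Z) = transpose Z ** (transpose Y ** Y) ** Z"
    by (simp add: matrix_transpose_mul matrix_mul_assoc)
  also have "\<dots> = (l * m) *\<^sub>R mat 1"
    by (simp add: l m matrix_scalar_ac scalar_matrix_assoc[symmetric])
  finally show ?thesis unfolding conformal_matrix_def by blast
qed

lemma conformal_matrix_scaleR:
  assumes "conformal_matrix Y"
  shows "conformal_matrix (c *\<^sub>R Y)"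
proof -
  obtain l where "transpose Y ** Y = l *\<^sub>R mat 1"
    using assms unfolding conformal_matrix_def by blast
  then have "transpose (c *\<^sub>R Y) ** (c *\<^sub>R Y) = (c * c * l) *\<^sub>R mat 1"
    by (simp add: matrix_scalar_ac scalar_matrix_assoc[symmetric] transpose_scalar)
  then show ?thesis unfolding conformal_matrix_def by blast
qed

lemma conformal_matrix_iff_2:
  "conformal_matrix (Y::real^2^2) \<longleftrightarrow>
     Y$1$1 * Y$1$2 + Y$2$1 * Y$2$2 = 0 \<and> Y$1$1^2 + Y$2$1^2 = Y$1$2^2 + Y$2$2^2"
proof
  assume "conformal_matrix Y"
  then obtain l where "transpose Y ** Y = l *\<^sub>R mat 1" unfolding conformal_matrix_def by blast
  then show "Y$1$1 * Y$1$2 + Y$2$1 * Y$2$2 = 0 \<and> Y$1$1^2 + Y$2$1^2 = Y$1$2^2 + Y$2$2^2"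
    unfolding matrix_eq_iff_2 matrix_matrix_mult_nth_2 by (simp add: mat_def transpose_def power2_eq_square)
next
  assume "Y$1$1 * Y$1$2 + Y$2$1 * Y$2$2 = 0 \<and> Y$1$1^2 + Y$2$1^2 = Y$1$2^2 + Y$2$2^2"
  then have "transpose Y ** Y = (Y$1$1^2 + Y$2$1^2) *\<^sub>R mat 1"
    unfolding matrix_eq_iff_2 matrix_matrix_mult_nth_2
    by (simp add: mat_def transpose_def power2_eq_square algebra_simps)
  then show "conformal_matrix Y" unfolding conformal_matrix_def by blast
qed

lemma conformal_matrix_det_eq_0_2:
  assumes "conformal_matrix (Y::real^2^2)" "det Y = 0"
  shows "Y = 0"
proof -
  let ?a = "Y$1$1" and ?b = "Y$1$2" and ?c = "Y$2$1" and ?d = "Y$2$2"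
  have orth: "?a * ?b + ?c * ?d = 0" and eq: "?a^2 + ?c^2 = ?b^2 + ?d^2"
    using assms(1) unfolding conformal_matrix_iff_2 by auto
  \<comment> \<open>Lagrange's identity: the squared determinant is the Gram determinant of the columns.\<close>
  have "(?a * ?d - ?b * ?c)^2 = (?a^2 + ?c^2) * (?b^2 + ?d^2) - (?a * ?b + ?c * ?d)^2"
    by algebra
  then have "(?a^2 + ?c^2) * (?a^2 + ?c^2) = 0"
    using assms(2) orth eq unfolding det_2 by simp
  then have "?a^2 + ?c^2 = 0" "?b^2 + ?d^2 = 0" using eq by simp_all
  then show ?thesis unfolding matrix_eq_iff_2 by simp
qed

lemma closed_conformal_matrix_conjugates_2:
  "closed {X. conformal_matrix ((M::real^2^2) ** X ** (N::real^2^2))}"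
  unfolding conformal_matrix_iff_2 matrix_matrix_mult_nth_2
  by (intro closed_Collect_conj closed_Collect_eq continuous_intros)

lemma strongly_conformal_imp_scrR_empty:
  assumes "\<forall>B\<in>A. invertible B" and "strongly_conformal A"
  shows "scrR A = {}"
proof -
  obtain M :: "real^2^2" where M: "invertible M"
    and orth: "\<forall>B\<in>A. orthogonal_matrix ((1 / sqrt \<bar>det B\<bar>) *\<^sub>R (M ** B ** matrix_inv M))"
    using assms(2) unfolding strongly_conformal_def by blast
  define N where "N = matrix_inv M"
  have MN: "M ** N = mat 1" "N ** M = mat 1"
    using invertible_matrix_inv[OF M] unfolding N_def by auto
  have "conformal_matrix (M ** B ** N)" if "B \<in> prod_semigroup A" for B
    using that
  proof induction
    case (gen B)
    have "det B \<noteq> 0" using gen assms(1) invertible_det_nz by blast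
    moreover have "conformal_matrix ((1 / sqrt \<bar>det B\<bar>) *\<^sub>R (M ** B ** N))"
      using gen orth orthogonal_imp_conformal_matrix unfolding N_def by blast
    ultimately show ?case using conformal_matrix_scaleR[of _ "sqrt \<bar>det B\<bar>"] by force
  next
    case (mult B C)
    have "(M ** B ** N) ** (M ** C ** N) = M ** B ** (N ** M) ** C ** N"
      by (simp add: matrix_mul_assoc)
    then have "M ** (B ** C) ** N = (M ** B ** N) ** (M ** C ** N)"
      by (simp add: matrix_mul_assoc MN)
    then show ?case using mult conformal_matrix_mult by simp
  qed
  then have "{c *\<^sub>R B | c B. B \<in> prod_semigroup A} \<subseteq> {X. conformal_matrix (M ** X ** N)}"
    by (auto simp: matrix_scalar_ac scalar_matrix_assoc[symmetric] intro!: conformal_matrix_scaleR)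
  then have conf: "scrS A \<subseteq> {X. conformal_matrix (M ** X ** N)}"
    unfolding scrS_def by (rule closure_minimal[OF _ closed_conformal_matrix_conjugates_2])
  have "X = 0" if "X \<in> scrS A" "det X = 0" for X
  proof -
    have "X = (N ** M) ** X ** (N ** M)" by (simp add: MN)
    also have "\<dots> = N ** (M ** X ** N) ** M" by (simp add: matrix_mul_assoc)
    also have "M ** X ** N = 0"
      using conf that by (intro conformal_matrix_det_eq_0_2) (auto simp: det_mul)
    finally show "X = 0" by simp
  qed
  then show ?thesis unfolding scrR_def rank_eq_1_iff_2 by blast
qed

lemma uniform_det_lower_bound:
  fixes S :: "(real^2^2) set"
  assumes nonsingular: "\<And>Y. Y \<in> closure {c *\<^sub>R B | c B. B \<in> S} \<Longrightarrow> det Y = 0 \<Longrightarrow> Y = 0"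
  shows "\<exists>\<delta>>0. \<forall>B\<in>S. \<delta> * norm B ^ 2 \<le> \<bar>det B\<bar>"
proof -
  define C where "C = closure {c *\<^sub>R B | c B. B \<in> S} \<inter> sphere 0 1"
  have "compact C"
    unfolding C_def by (simp add: Int_commute compact_Int_closed)
  have normalized_in_C: "(1 / norm B) *\<^sub>R B \<in> C" if "B \<in> S" "B \<noteq> 0" for B
    unfolding C_def using that by (auto intro!: closure_subset[THEN subsetD])
  obtain \<delta> where "\<delta> > 0" and \<delta>: "\<forall>Y\<in>C. \<delta> \<le> \<bar>det Y\<bar>"
  proof (cases "C = {}")
    case False
    have "continuous_on C (\<lambda>Y. \<bar>det Y\<bar>)" unfolding det_2 by (intro continuous_intros)
    then obtain Y0 where "Y0 \<in> C" "\<forall>Y\<in>C. \<bar>det Y0\<bar> \<le> \<bar>det Y\<bar>"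
      using continuous_attains_inf[OF \<open>compact C\<close> False] by blast
    moreover have "det Y0 \<noteq> 0" using nonsingular \<open>Y0 \<in> C\<close> unfolding C_def by force
    ultimately show ?thesis using that[of "\<bar>det Y0\<bar>"] by auto
  qed (use that[of 1] in auto)
  have "\<delta> * norm B ^ 2 \<le> \<bar>det B\<bar>" if "B \<in> S" for B
  proof (cases "B = 0")
    case False
    have "\<delta> \<le> \<bar>det ((1 / norm B) *\<^sub>R B)\<bar>" using \<delta> normalized_in_C[OF that False] by blast
    also have "\<dots> = \<bar>det B\<bar> / norm B ^ 2" by (simp add: det_scaleR_2 power_divide abs_mult)
    finally show ?thesis using False by (simp add: field_simps)
  qed (simp add: det_2)
  with \<open>\<delta> > 0\<close> show ?thesis by blast
qed

definition unimodular_normalize :: "real^2^2 \<Rightarrow> real^2^2" where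
  "unimodular_normalize B = (1 / sqrt \<bar>det B\<bar>) *\<^sub>R B"

lemma abs_det_unimodular_normalize: "det B \<noteq> 0 \<Longrightarrow> \<bar>det (unimodular_normalize B)\<bar> = 1"
  unfolding unimodular_normalize_def det_scaleR_2 by (simp add: power_divide abs_mult)

lemma norm_unimodular_normalize:
  "norm (unimodular_normalize B) ^ 2 = norm B ^ 2 / \<bar>det B\<bar>"
  unfolding unimodular_normalize_def by (simp add: power_mult_distrib power_divide)

lemma unimodular_normalize_mult:
  "unimodular_normalize B ** unimodular_normalize C = unimodular_normalize (B ** C)"
  unfolding unimodular_normalize_def
  by (simp add: det_mul abs_mult real_sqrt_mult matrix_scalar_ac scalar_matrix_assoc[symmetric])

definition contracted_forms :: "(real^'n^'n) set \<Rightarrow> (real^'n^'n) set" where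
  "contracted_forms K = {Q. transpose Q = Q \<and> (\<forall>x. 0 \<le> x \<bullet> (Q *v x)) \<and>
     (\<forall>s\<in>K. \<forall>x. (s *v x) \<bullet> (Q *v (s *v x)) \<le> x \<bullet> x)}"

lemma quadratic_form_conjugate:
  "x \<bullet> ((transpose g ** Q ** g) *v x) = (g *v x) \<bullet> ((Q::real^'n^'n) *v (g *v x))"
proof -
  have "(transpose g ** Q ** g) *v x = transpose g *v (Q *v (g *v x))"
    by (simp add: matrix_vector_mul_assoc matrix_mul_assoc)
  then show ?thesis by (metis dot_lmul_matrix inner_commute transpose_matrix_vector)
qed

lemma quadratic_form_combination:
  "x \<bullet> ((a *\<^sub>R P + b *\<^sub>R Q) *v x) = a * (x \<bullet> ((P::real^'n^'n) *v x)) + b * (x \<bullet> (Q *v x))"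
proof -
  have "(a *\<^sub>R P + b *\<^sub>R Q) *v x = a *\<^sub>R (P *v x) + b *\<^sub>R (Q *v x)"
    by (simp add: matrix_vector_mult_def vec_eq_iff sum.distrib sum_distrib_left algebra_simps)
  then show ?thesis by (simp add: inner_add_right)
qed

lemma contracted_forms_conjugate:
  assumes "Q \<in> contracted_forms K" and "\<And>s. s \<in> K \<Longrightarrow> g ** s \<in> K"
  shows "transpose g ** Q ** g \<in> contracted_forms K"
proof -
  have "(s *v x) \<bullet> ((transpose g ** Q ** g) *v (s *v x)) \<le> x \<bullet> x" if "s \<in> K" for s x
  proof -
    have "((g ** s) *v x) \<bullet> (Q *v ((g ** s) *v x)) \<le> x \<bullet> x"
      using assms that unfolding contracted_forms_def by blast
    then show ?thesis unfolding quadratic_form_conjugate by (simp add: matrix_vector_mul_assoc)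
  qed
  with assms(1) show ?thesis unfolding contracted_forms_def
    by (auto simp: quadratic_form_conjugate matrix_transpose_mul matrix_mul_assoc)
qed

lemma convex_contracted_forms: "convex (contracted_forms (K::(real^'n^'n) set))"
proof (rule convexI)
  fix P Q :: "real^'n^'n" and u v :: real
  assume "P \<in> contracted_forms K" "Q \<in> contracted_forms K" "0 \<le> u" "0 \<le> v" "u + v = 1"
  moreover have "transpose (u *\<^sub>R P + v *\<^sub>R Q) = u *\<^sub>R transpose P + v *\<^sub>R transpose Q"
    by (simp add: transpose_def vec_eq_iff)
  ultimately show "u *\<^sub>R P + v *\<^sub>R Q \<in> contracted_forms K"
    unfolding contracted_forms_def
    by (auto simp: quadratic_form_combination intro: convex_bound_le)
qed

lemma closed_contracted_forms: "closed (contracted_forms (K::(real^'n^'n) set))"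
proof -
  have "contracted_forms K = {Q. \<forall>i j. Q$i$j = Q$j$i} \<inter> (\<Inter>x. {Q. 0 \<le> x \<bullet> (Q *v x)}) \<inter>
      (\<Inter>s\<in>K. \<Inter>x. {Q. (s *v x) \<bullet> (Q *v (s *v x)) \<le> x \<bullet> x})"
    unfolding contracted_forms_def by (auto simp: vec_eq_iff transpose_def)
  moreover have "closed {Q::real^'n^'n. \<forall>i j. Q$i$j = Q$j$i}"
    by (intro closed_Collect_all closed_Collect_eq continuous_intros)
  moreover have "closed {Q::real^'n^'n. a \<le> y \<bullet> (Q *v y)}" "closed {Q::real^'n^'n. y \<bullet> (Q *v y) \<le> a}"
    for a y unfolding inner_vec_def matrix_vector_mult_def
    by (intro closed_Collect_le continuous_intros)+
  ultimately show ?thesis by (simp add: closed_Int closed_INT)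
qed

lemma bounded_contracted_forms_2:
  assumes "mat 1 \<in> K"
  shows "bounded (contracted_forms (K::(real^2^2) set))"
proof -
  have "norm Q \<le> 2" if "Q \<in> contracted_forms K" for Q
  proof -
    have sym: "Q$2$1 = Q$1$2" and psd: "\<And>x. 0 \<le> x \<bullet> (Q *v x)" and le: "\<And>x. x \<bullet> (Q *v x) \<le> x \<bullet> x"
      using that assms unfolding contracted_forms_def by (auto simp: vec_eq_iff transpose_def dest!: bspec)
    have "0 \<le> Q$1$1" "Q$1$1 \<le> 1" "0 \<le> Q$2$2" "Q$2$2 \<le> 1"
      using psd[of "vector [1, 0]"] psd[of "vector [0, 1]"] le[of "vector [1, 0]"] le[of "vector [0, 1]"]
      by (simp_all add: quadratic_form_2 inner_self_2)
    moreover have "0 \<le> Q$1$1 + 2 * Q$1$2 + Q$2$2" "Q$1$1 - 2 * Q$1$2 + Q$2$2 \<le> 2"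
      "0 \<le> Q$1$1 - 2 * Q$1$2 + Q$2$2" "Q$1$1 + 2 * Q$1$2 + Q$2$2 \<le> 2"
      using psd[of "vector [1, 1]"] le[of "vector [1, -1]"] psd[of "vector [1, -1]"] le[of "vector [1, 1]"] sym
      by (simp_all add: quadratic_form_2 inner_self_2)
    ultimately have "\<forall>i j. \<bar>Q$i$j\<bar> \<le> 1"
      using sym unfolding forall_2 by auto
    then have sq: "Q$i$j ^ 2 \<le> 1" for i j by (simp add: abs_square_le_1)
    have "norm Q ^ 2 \<le> 2 ^ 2"
      unfolding norm_matrix_2 using sq[of 1 1] sq[of 1 2] sq[of 2 1] sq[of 2 2] by simp
    then show ?thesis by (rule power2_le_imp_le) simp
  qed
  then show ?thesis unfolding bounded_iff by blast
qed

lemma scaled_identity_in_contracted_forms_2: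
  assumes "bounded (K::(real^2^2) set)"
  shows "\<exists>\<epsilon>>0. \<epsilon> *\<^sub>R mat 1 \<in> contracted_forms K"
proof -
  obtain C where "C > 0" and C: "\<And>s. s \<in> K \<Longrightarrow> norm s \<le> C"
    using assms bounded_pos by blast
  define \<epsilon> where "\<epsilon> = 1 / C ^ 2"
  have form: "x \<bullet> ((\<epsilon> *\<^sub>R mat 1) *v x) = \<epsilon> * norm x ^ 2" for x :: "real^2"
    by (simp add: quadratic_form_2 power2_norm_eq_inner inner_self_2 mat_def algebra_simps)
  have "\<epsilon> * norm (s *v x) ^ 2 \<le> norm x ^ 2" if "s \<in> K" for s x
  proof -
    have "norm (s *v x) \<le> C * norm x"
      using norm_matrix_vector_mult_le_2[of s x] C[OF that] by (meson mult_right_mono norm_ge_zero order_trans)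
    then have "norm (s *v x) ^ 2 \<le> C ^ 2 * norm x ^ 2"
      by (metis norm_ge_zero power_mono power_mult_distrib)
    then show ?thesis using \<open>C > 0\<close> unfolding \<epsilon>_def by (simp add: field_simps)
  qed
  moreover have "0 \<le> \<epsilon> * norm x ^ 2" for x :: "real^2"
    unfolding \<epsilon>_def by simp
  ultimately have "\<epsilon> *\<^sub>R mat 1 \<in> contracted_forms K"
    unfolding contracted_forms_def mem_Collect_eq form
    by (simp add: transpose_scalar power2_norm_eq_inner)
  moreover have "\<epsilon> > 0" using \<open>C > 0\<close> unfolding \<epsilon>_def by simp
  ultimately show ?thesis by blast
qed

lemma psd_det_pos_imp_pos_2:
  assumes "transpose Q = Q" "\<forall>x. 0 \<le> x \<bullet> ((Q::real^2^2) *v x)" "0 < det Q"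
  shows "0 < Q$1$1"
proof -
  have "0 \<le> Q$1$1" using assms(2) by (auto dest: spec[of _ "vector [1, 0]"] simp: quadratic_form_2)
  moreover have "Q$2$1 = Q$1$2" using assms(1) by (auto simp: vec_eq_iff transpose_def)
  then have "Q$1$1 * Q$2$2 > Q$1$2 ^ 2" using assms(3) by (simp add: det_2 power2_eq_square)
  then have "Q$1$1 \<noteq> 0" by (smt (verit) mult_eq_0_iff zero_le_power2)
  ultimately show ?thesis by simp
qed

lemma det_midpoint_le_imp_eq_2:
  fixes P Q :: "real^2^2"
  assumes "transpose P = P" "transpose Q = Q" "0 < P$1$1" "0 < Q$1$1"
    and "0 < det P" "det Q = det P" "det (midpoint P Q) \<le> det P"
  shows "P = Q"
proof -
  let ?a = "P$1$1" and ?b = "P$1$2" and ?c = "P$2$2" and ?d = "Q$1$1" and ?e = "Q$1$2" and ?f = "Q$2$2"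
  define m where "m = det P"
  have symP: "P$2$1 = ?b" and symQ: "Q$2$1 = ?e" using assms(1,2) by (auto simp: vec_eq_iff transpose_def)
  have detP: "?a * ?c - ?b^2 = m" and detQ: "?d * ?f - ?e^2 = m"
    using symP symQ assms(6) unfolding m_def det_2 by (simp_all add: power2_eq_square)
  have "det (midpoint P Q) = ((?a + ?d) * (?c + ?f) - (?b + ?e)^2) / 4"
    unfolding midpoint_def det_2 using symP symQ by (simp add: power2_eq_square field_simps)
  then have cross: "?a * ?f + ?c * ?d - 2 * ?b * ?e - 2 * m \<le> 0"
    using assms(7) detP detQ unfolding m_def by (simp add: power2_eq_square algebra_simps)
  \<comment> \<open>Multiplied by a d, the concavity defect of det becomes a sum of squares.\<close>
  have "?a * ?d * (?a * ?f + ?c * ?d - 2 * ?b * ?e - 2 * m)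
      = ?a^2 * (?d * ?f) + ?d^2 * (?a * ?c) - 2 * ?a * ?b * ?d * ?e - 2 * ?a * ?d * m"
    by (simp add: power2_eq_square algebra_simps)
  also have "\<dots> = m * (?a - ?d)^2 + (?a * ?e - ?d * ?b)^2"
    using detP detQ by (simp add: power2_eq_square algebra_simps)
  finally have "?a * ?d * (?a * ?f + ?c * ?d - 2 * ?b * ?e - 2 * m)
      = m * (?a - ?d)^2 + (?a * ?e - ?d * ?b)^2" .
  moreover have "?a * ?d * (?a * ?f + ?c * ?d - 2 * ?b * ?e - 2 * m) \<le> 0"
    using cross assms(3,4) by (simp add: mult_nonneg_nonpos)
  ultimately have "m * (?a - ?d)^2 = 0" "(?a * ?e - ?d * ?b)^2 = 0"
    using assms(5) unfolding m_def by (smt (verit) mult_nonneg_nonneg zero_le_power2)+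
  then have ad: "?a = ?d" and be: "?b = ?e" using assms(3,5) unfolding m_def by auto
  then have "?a * ?c = ?a * ?f" using detP detQ by (simp only:)
  then have "?c = ?f" using assms(3) by simp
  with ad be symP symQ show ?thesis unfolding matrix_eq_iff_2 by simp
qed

lemma bounded_unimodular_semigroup_invariant_form_2:
  fixes G :: "(real^2^2) set"
  assumes "bounded G" and unimodular: "\<And>g. g \<in> G \<Longrightarrow> \<bar>det g\<bar> = 1"
    and mult: "\<And>g h. g \<in> G \<Longrightarrow> h \<in> G \<Longrightarrow> g ** h \<in> G"
  shows "\<exists>Q. transpose Q = Q \<and> 0 < Q$1$1 \<and> 0 < det Q \<and> (\<forall>g\<in>G. transpose g ** Q ** g = Q)"
proof -
  define F where "F = contracted_forms (insert (mat 1) G)"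
  have "compact F"
    unfolding F_def by (simp add: compact_eq_bounded_closed bounded_contracted_forms_2 closed_contracted_forms)
  obtain \<epsilon> where "\<epsilon> > 0" "\<epsilon> *\<^sub>R mat 1 \<in> F"
    using scaled_identity_in_contracted_forms_2 \<open>bounded G\<close> unfolding F_def by (meson bounded_insert)
  moreover have "continuous_on F det" unfolding det_2 by (intro continuous_intros)
  ultimately obtain Q where "Q \<in> F" and max: "\<forall>P\<in>F. det P \<le> det Q"
    using continuous_attains_sup[OF \<open>compact F\<close>] by blast
  have "0 < det (\<epsilon> *\<^sub>R mat 1 :: real^2^2)" using \<open>\<epsilon> > 0\<close> by (simp add: det_scaleR_2)
  then have "0 < det Q" using max \<open>\<epsilon> *\<^sub>R mat 1 \<in> F\<close> by fastforce
  have pos: "0 < P$1$1" if "P \<in> F" "0 < det P" for P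
    using that psd_det_pos_imp_pos_2 unfolding F_def contracted_forms_def by blast
  have "transpose g ** Q ** g = Q" if "g \<in> G" for g
  proof -
    define Q' where "Q' = transpose g ** Q ** g"
    have "Q' \<in> F"
      unfolding Q'_def F_def using \<open>Q \<in> F\<close> that mult
      by (intro contracted_forms_conjugate) (auto simp: F_def)
    moreover have "det Q' = det Q"
      unfolding Q'_def using unimodular[OF that] by (simp add: det_mul) (metis abs_mult_self_eq mult_1_right)
    moreover have "midpoint Q Q' \<in> F"
      using \<open>Q \<in> F\<close> \<open>Q' \<in> F\<close> convex_contracted_forms unfolding F_def
      by (metis convex_contains_segment midpoint_in_closed_segment subsetD)
    ultimately show ?thesis
      using \<open>Q \<in> F\<close> max pos \<open>0 < det Q\<close> det_midpoint_le_imp_eq_2[of Q Q']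
      unfolding Q'_def F_def contracted_forms_def by auto
  qed
  with \<open>Q \<in> F\<close> \<open>0 < det Q\<close> pos show ?thesis unfolding F_def contracted_forms_def by blast
qed

lemma positive_definite_factorization_2:
  fixes Q :: "real^2^2"
  assumes "transpose Q = Q" "0 < Q$1$1" "0 < det Q"
  shows "\<exists>M::real^2^2. invertible M \<and> transpose M ** M = Q"
proof -
  define a b m where "a = Q$1$1" and "b = Q$1$2" and "m = det Q"
  have "Q$2$1 = b" using assms(1) unfolding b_def by (auto simp: vec_eq_iff transpose_def)
  \<comment> \<open>The Cholesky factor of Q.\<close>
  define M :: "real^2^2" where "M = vector [vector [sqrt a, b / sqrt a], vector [0, sqrt (m / a)]]"
  have "a > 0" "m > 0" using assms unfolding a_def m_def by auto
  have "Q$2$2 = b / sqrt a * (b / sqrt a) + m / a"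
    using \<open>a > 0\<close> \<open>Q$2$1 = b\<close> unfolding a_def b_def m_def det_2 by (simp add: field_simps)
  then have "transpose M ** M = Q"
    unfolding matrix_eq_iff_2 matrix_matrix_mult_nth_2 M_def
    using \<open>a > 0\<close> \<open>m > 0\<close> \<open>Q$2$1 = b\<close> by (simp add: transpose_def a_def b_def)
  moreover have "det M \<noteq> 0"
    unfolding M_def det_2 using \<open>a > 0\<close> \<open>m > 0\<close> by simp
  ultimately show ?thesis by (intro exI[of _ M]) (simp add: invertible_det_nz)
qed

lemma orthogonal_conjugate_if_invariant_form:
  fixes M g :: "real^'n^'n"
  assumes "invertible M" "transpose g ** (transpose M ** M) ** g = transpose M ** M"
  shows "orthogonal_matrix (M ** g ** matrix_inv M)"
proof -
  define N where "N = matrix_inv M"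
  have "M ** N = mat 1" using invertible_matrix_inv[OF assms(1)] unfolding N_def by blast
  have "transpose (M ** g ** N) ** (M ** g ** N)
      = transpose N ** (transpose g ** (transpose M ** M) ** g) ** N"
    by (simp add: matrix_transpose_mul matrix_mul_assoc)
  also have "\<dots> = transpose (M ** N) ** (M ** N)"
    unfolding assms(2) by (simp add: matrix_transpose_mul matrix_mul_assoc)
  finally have "transpose (M ** g ** N) ** (M ** g ** N) = mat 1"
    using \<open>M ** N = mat 1\<close> by simp
  then show ?thesis
    unfolding orthogonal_matrix_def N_def using matrix_left_right_inverse by blast
qed

lemma scrR_empty_imp_strongly_conformal:
  assumes "\<forall>B\<in>A. invertible B" and "scrR A = {}"
  shows "strongly_conformal A"
proof -
  have det_nz: "det B \<noteq> 0" if "B \<in> prod_semigroup A" for B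
    using det_prod_semigroup_nonzero[OF assms(1) that] .
  have "\<And>Y. Y \<in> scrS A \<Longrightarrow> det Y = 0 \<Longrightarrow> Y = 0"
    using assms(2) unfolding scrR_def rank_eq_1_iff_2 by blast
  then obtain \<delta> where "\<delta> > 0" and \<delta>: "\<forall>B\<in>prod_semigroup A. \<delta> * norm B ^ 2 \<le> \<bar>det B\<bar>"
    using uniform_det_lower_bound[of "prod_semigroup A"] unfolding scrS_def by blast
  define G where "G = unimodular_normalize ` prod_semigroup A"
  have "norm g \<le> sqrt (1 / \<delta>)" if g: "g \<in> G" for g
  proof -
    obtain B where "B \<in> prod_semigroup A" "g = unimodular_normalize B" using g unfolding G_def by blast
    then have "norm g ^ 2 \<le> 1 / \<delta>"
      using \<delta> det_nz \<open>\<delta> > 0\<close> by (simp add: norm_unimodular_normalize field_simps)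
    then show ?thesis by (simp add: real_le_rsqrt)
  qed
  then have "bounded G" unfolding bounded_iff by blast
  moreover have "\<And>g. g \<in> G \<Longrightarrow> \<bar>det g\<bar> = 1"
    unfolding G_def using det_nz abs_det_unimodular_normalize by blast
  moreover have "\<And>g h. g \<in> G \<Longrightarrow> h \<in> G \<Longrightarrow> g ** h \<in> G"
    unfolding G_def by (auto simp: unimodular_normalize_mult intro: prod_semigroup.mult)
  ultimately obtain Q where "transpose Q = Q" "0 < Q$1$1" "0 < det Q"
    and invariant: "\<forall>g\<in>G. transpose g ** Q ** g = Q"
    using bounded_unimodular_semigroup_invariant_form_2 by blast
  then obtain M :: "real^2^2" where "invertible M" "transpose M ** M = Q"
    using positive_definite_factorization_2 by blast
  have "orthogonal_matrix ((1 / sqrt \<bar>det B\<bar>) *\<^sub>R (M ** B ** matrix_inv M))" if "B \<in> A" for B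
  proof -
    have "unimodular_normalize B \<in> G" unfolding G_def using that by (blast intro: prod_semigroup.gen)
    then have "orthogonal_matrix (M ** unimodular_normalize B ** matrix_inv M)"
      using invariant \<open>invertible M\<close> \<open>transpose M ** M = Q\<close> orthogonal_conjugate_if_invariant_form
      by blast
    then show ?thesis
      unfolding unimodular_normalize_def by (simp add: matrix_scalar_ac scalar_matrix_assoc)
  qed
  with \<open>invertible M\<close> show ?thesis unfolding strongly_conformal_def by blast
qed

theorem lemma3p1:
  fixes A :: "(real^2^2) set"
  assumes "\<forall>B\<in>A. invertible B"
  shows "scrR A = {} \<longleftrightarrow> strongly_conformal A"
  using strongly_conformal_imp_scrR_empty[OF assms] scrR_empty_imp_strongly_conformal[OF assms]
  by blast

end
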